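(* For every integer $n\ge1$ and every positive multiple $m$ of $4$, the graph $G_{n,m}$ is vertex transitive.
   Context: For $m$ a multiple of $4$ and $n\ge1$, $G_{n,m}$ is the simple graph with vertex set $\{i(a,b): i\in\mathbb{Z}_m,\ a,b\in\mathbb{Z}_n\}$ ($n^2m$ vertices; the vertices with first index $i$ form cluster $i$, clusters arranged as the nodes of the cycle $\mathbb{Z}_m$, labelled $0,\dots,m-1$), with an edge between: (1) all pairs $i(a,b),j(c,d)$ with $i$ and $j$ adjacent in $\mathbb{Z}_m$ ("short" edges); (2) all pairs $i(a,b),j(a,d)$ with $b\ne d$, $i$ even and $j=(i+m/4)\bmod m$; (3) all pairs $i(a,b),j(c,b)$ with $a\ne c$, $i$ even and $j=(i-m/4)\bmod m$; (4) all pairs $i(a,b),j(c,b)$ with $a\ne c$, $i$ odd and $j=(i+m/4)\bmod m$; (5) all pairs $i(a,b),j(a,d)$ with $b\ne d$, $i$ odd and $j=(i-m/4)\bmod m$. *)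

theory Defs
  imports Main
begin

text \<open>Vertices of G_{n,m}: triples (i,a,b) with i in Z_m (as 0..m-1) and a,b in Z_n (as 0..n-1).\<close>

type_synonym gvert = "nat \<times> nat \<times> nat"

definition G_verts :: "nat \<Rightarrow> nat \<Rightarrow> gvert set" where
  "G_verts n m = {(i,a,b). i < m \<and> a < n \<and> b < n}"

text \<open>Directed generating rules (2)-(5) and the short edges (1); the edge relation is their
  symmetric closure restricted to the vertex set.\<close>

definition G_rule :: "nat \<Rightarrow> gvert \<Rightarrow> gvert \<Rightarrow> bool" where
  "G_rule m x y = (case x of (i,a,b) \<Rightarrow> case y of (j,c,d) \<Rightarrow>
      j = (i + 1) mod m
    \<or> (even i \<and> j = (i + m div 4) mod m \<and> a = c \<and> b \<noteq> d)
    \<or> (even i \<and> j = (i + m - m div 4) mod m \<and> b = d \<and> a \<noteq> c)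
    \<or> (odd i \<and> j = (i + m div 4) mod m \<and> b = d \<and> a \<noteq> c)
    \<or> (odd i \<and> j = (i + m - m div 4) mod m \<and> a = c \<and> b \<noteq> d))"

definition G_adj :: "nat \<Rightarrow> nat \<Rightarrow> gvert \<Rightarrow> gvert \<Rightarrow> bool" where
  "G_adj n m x y = (x \<in> G_verts n m \<and> y \<in> G_verts n m \<and> (G_rule m x y \<or> G_rule m y x))"

definition is_automorphism :: "'v set \<Rightarrow> ('v \<Rightarrow> 'v \<Rightarrow> bool) \<Rightarrow> ('v \<Rightarrow> 'v) \<Rightarrow> bool" where
  "is_automorphism V E f = (bij_betw f V V \<and> (\<forall>x\<in>V. \<forall>y\<in>V. E (f x) (f y) \<longleftrightarrow> E x y))"

definition vertex_transitive :: "'v set \<Rightarrow> ('v \<Rightarrow> 'v \<Rightarrow> bool) \<Rightarrow> bool" where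
  "vertex_transitive V E = (\<forall>u\<in>V. \<forall>v\<in>V. \<exists>f. is_automorphism V E f \<and> f u = v)"

end

theory Submission
  imports Defs "HOL-Combinatorics.Permutations"
begin

text \<open>Two kinds of automorphisms suffice. Permuting the first coordinates and, independently,
  the second coordinates of all vertices preserves every edge rule, since the rules only test
  coordinates for equality. Advancing every cluster by one step while swapping the two
  coordinates preserves the short edges, and it flips the parity of the cluster index, which
  exchanges the roles of rules (2)/(4) and of rules (3)/(5); this needs only that m is even. Iterating the shift moves any
  cluster to any other, and the coordinate permutations then fix up the coordinates.\<close>

lemma is_automorphism_id: "is_automorphism V E id"
  unfolding is_automorphism_def by simp

lemma is_automorphism_comp:
  assumes "is_automorphism V E f" "is_automorphism V E g"
  shows "is_automorphism V E (g \<circ> f)"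
proof -
  have "bij_betw f V V" "bij_betw g V V"
    using assms unfolding is_automorphism_def by auto
  then have "bij_betw (g \<circ> f) V V" and "\<And>x. x \<in> V \<Longrightarrow> f x \<in> V"
    by (auto intro: bij_betw_trans dest: bij_betwE)
  then show ?thesis
    using assms unfolding is_automorphism_def by auto
qed

lemma is_automorphism_funpow:
  assumes "is_automorphism V E f"
  shows "is_automorphism V E (f ^^ k)"
proof (induction k)
  case 0
  show ?case
    unfolding funpow.simps(1) by (rule is_automorphism_id)
next
  case (Suc k)
  show ?case
    unfolding funpow.simps(2) by (rule is_automorphism_comp[OF Suc assms])
qed

lemma is_automorphismI_finite:
  assumes "finite V" "f ` V \<subseteq> V" "inj_on f V"
    and "\<And>x y. x \<in> V \<Longrightarrow> y \<in> V \<Longrightarrow> E (f x) (f y) \<longleftrightarrow> E x y"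
  shows "is_automorphism V E f"
  using assms endo_inj_surj[OF assms(1-3)] unfolding is_automorphism_def bij_betw_def by blast

lemma G_verts_eq: "G_verts n m = {..<m} \<times> {..<n} \<times> {..<n}"
  unfolding G_verts_def by auto

lemma finite_G_verts: "finite (G_verts n m)"
  unfolding G_verts_eq by simp

lemma G_automorphismI:
  assumes "f ` G_verts n m \<subseteq> G_verts n m" "inj_on f (G_verts n m)"
    and "\<And>x y. x \<in> G_verts n m \<Longrightarrow> y \<in> G_verts n m \<Longrightarrow> G_rule m (f x) (f y) \<longleftrightarrow> G_rule m x y"
  shows "is_automorphism (G_verts n m) (G_adj n m) f"
  using assms by (intro is_automorphismI_finite finite_G_verts) (auto simp: G_adj_def)

definition permute_coords :: "(nat \<Rightarrow> nat) \<Rightarrow> (nat \<Rightarrow> nat) \<Rightarrow> gvert \<Rightarrow> gvert" where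
  "permute_coords s t = (\<lambda>(i,a,b). (i, s a, t b))"

lemma G_rule_permute_coords:
  assumes "inj s" "inj t"
  shows "G_rule m (permute_coords s t x) (permute_coords s t y) = G_rule m x y"
  using assms by (cases x; cases y) (simp add: permute_coords_def G_rule_def inj_eq)

lemma inj_permute_coords:
  assumes "inj s" "inj t"
  shows "inj (permute_coords s t)"
proof (rule injI)
  fix x y assume "permute_coords s t x = permute_coords s t y"
  then show "x = y"
    using assms by (cases x; cases y) (simp add: permute_coords_def inj_eq)
qed

lemma permute_coords_automorphism:
  assumes s: "s permutes {..<n}" and t: "t permutes {..<n}"
  shows "is_automorphism (G_verts n m) (G_adj n m) (permute_coords s t)"
proof (rule G_automorphismI)
  have "a < n \<Longrightarrow> s a < n" "b < n \<Longrightarrow> t b < n" for a b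
    using permutes_in_image[OF s, of a] permutes_in_image[OF t, of b] by simp_all
  then show "permute_coords s t ` G_verts n m \<subseteq> G_verts n m"
    by (auto simp: G_verts_def permute_coords_def)
  have "inj (permute_coords s t)"
    using inj_permute_coords permutes_inj[OF s] permutes_inj[OF t] by blast
  then show "inj_on (permute_coords s t) (G_verts n m)"
    by (rule inj_on_subset) simp
  show "G_rule m (permute_coords s t x) (permute_coords s t y) = G_rule m x y" for x y
    using G_rule_permute_coords[OF permutes_inj[OF s] permutes_inj[OF t]] .
qed

lemma Suc_mod_shift_iff:
  fixes i j k m :: nat
  assumes "j < m"
  shows "Suc j mod m = (Suc i mod m + k) mod m \<longleftrightarrow> j = (i + k) mod m"
proof -
  have "Suc j mod m = (Suc i mod m + k) mod m \<longleftrightarrow> (j + 1) mod m = (i + k + 1) mod m"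
    by (simp add: mod_simps)
  also have "\<dots> \<longleftrightarrow> j mod m = (i + k) mod m"
    by (simp add: nat_mod_eq_iff)
  finally show ?thesis
    using assms by simp
qed

definition shift_swap :: "nat \<Rightarrow> gvert \<Rightarrow> gvert" where
  "shift_swap m = (\<lambda>(i,a,b). (Suc i mod m, b, a))"

lemma G_rule_shift_swap:
  assumes "even m" "i < m" "j < m"
  shows "G_rule m (shift_swap m (i,a,b)) (shift_swap m (j,c,d)) = G_rule m (i,a,b) (j,c,d)"
proof -
  have diff_assoc: "\<And>i. i + m - m div 4 = i + (m - m div 4)"
    by (simp add: div_le_dividend)
  have "even (Suc i mod m) \<longleftrightarrow> odd i"
    using dvd_mod_iff[of 2 m "Suc i"] assms(1) by simp
  then show ?thesis
    unfolding shift_swap_def G_rule_def prod.case diff_assoc Suc_mod_shift_iff[OF assms(3)]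
    by auto
qed

lemma shift_swap_automorphism:
  assumes "even m"
  shows "is_automorphism (G_verts n m) (G_adj n m) (shift_swap m)"
proof (rule G_automorphismI)
  show "shift_swap m ` G_verts n m \<subseteq> G_verts n m"
    by (auto simp: G_verts_def shift_swap_def)
  show "inj_on (shift_swap m) (G_verts n m)"
  proof (rule inj_onI)
    fix x y assume "x \<in> G_verts n m" "y \<in> G_verts n m" "shift_swap m x = shift_swap m y"
    then obtain i a b j c d where "x = (i,a,b)" "y = (j,c,d)" "i < m" "j < m"
      "Suc j mod m = (Suc i mod m + 0) mod m" "a = c" "b = d"
      by (auto simp: G_verts_def shift_swap_def)
    then show "x = y"
      using Suc_mod_shift_iff[of j m i 0] by simp
  qed
  show "G_rule m (shift_swap m x) (shift_swap m y) = G_rule m x y"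
    if "x \<in> G_verts n m" "y \<in> G_verts n m" for x y
    using that G_rule_shift_swap[OF assms] by (auto simp: G_verts_def)
qed

lemma shift_swap_funpow:
  assumes "i < m"
  shows "(shift_swap m ^^ k) (i,a,b) =
    ((i + k) mod m, if even k then a else b, if even k then b else a)"
  using assms by (induction k) (simp_all add: shift_swap_def mod_Suc_eq)

theorem claim4p3:
  fixes n m :: nat
  assumes "n \<ge> 1" and "m > 0" and "4 dvd m"
  shows "vertex_transitive (G_verts n m) (G_adj n m)"
  unfolding vertex_transitive_def
proof (intro ballI)
  fix u v assume "u \<in> G_verts n m" "v \<in> G_verts n m"
  then obtain i a b j c d where u: "u = (i,a,b)" "i < m" "a < n" "b < n"
    and v: "v = (j,c,d)" "j < m" "c < n" "d < n"
    unfolding G_verts_def by auto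
  define k where "k = j + m - i"
  define a' where "a' = (if even k then a else b)"
  define b' where "b' = (if even k then b else a)"
  let ?f = "permute_coords (transpose a' c) (transpose b' d) \<circ> shift_swap m ^^ k"
  have "even m"
    using assms(3) by (auto elim: dvd_trans[rotated])
  have "transpose a' c permutes {..<n}" "transpose b' d permutes {..<n}"
    using u v by (auto simp: a'_def b'_def intro: permutes_swap_id)
  then have "is_automorphism (G_verts n m) (G_adj n m) ?f"
    by (intro is_automorphism_comp[OF is_automorphism_funpow[OF shift_swap_automorphism]]
        permute_coords_automorphism \<open>even m\<close>)
  moreover have "(shift_swap m ^^ k) u = (j, a', b')"
    using u v by (simp add: shift_swap_funpow k_def a'_def b'_def)
  then have "?f u = v"
    using v(1) by (simp add: permute_coords_def)
  ultimately show "\<exists>f. is_automorphism (G_verts n m) (G_adj n m) f \<and> f u = v"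
    by blast
qed

end
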